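(* Let $p\ge 1$ and let $y_1,y_2\in\mathbb{R}^p$ be two distinct points with $d=\|y_1-y_2\|_2>0$. Let $\lambda>0$, $\delta>0$ and put $\eta=\lambda\delta$. Consider the iterates $(\theta_1^{(t)},\theta_2^{(t)})_{t\ge 0}$ of the MM algorithm described in the context, started at $\theta_1^{(0)}=y_1$, $\theta_2^{(0)}=y_2$. Let $\phi\in(0,1)$. (i) If $\eta>d$ and $$\lambda=\frac{2\phi\,\eta\, d}{(1-\phi)(\eta-d)},$$ then $\|\theta_1^{(1)}-\theta_2^{(0)}\|_2=(1-\phi)\,\|\theta_1^{(0)}-\theta_2^{(0)}\|_2$. (ii) If $\eta\le d$, then $\theta_i^{(t)}=y_i$ for all $t\ge 1$ and $i=1,2$.
   Context: The minimax concave penalty (MCP) with parameters $\lambda>0$, $\delta>0$ is $\rho(t)=\int_0^t(1-\frac{x}{\lambda\delta})_+\,dx$ for $t\ge 0$, so $\rho'(t)=(1-t/(\lambda\delta))_+$. For two observations $y_1,y_2$ one minimizes $\ell(\theta_1,\theta_2)=\|y_1-\theta_1\|_2^2+\|y_2-\theta_2\|_2^2+\lambda\rho(\|\theta_1-\theta_2\|_2)$ by the following blockwise MM (majorization–minimization) iteration, defined as long as the two current centers are distinct. Given $(\theta_1^{(t)},\theta_2^{(t)})$, first set $$w_1^{(t)}=\frac{\bigl(1-\|\theta_1^{(t)}-\theta_2^{(t)}\|_2/(\lambda\delta)\bigr)_+}{2\|\theta_1^{(t)}-\theta_2^{(t)}\|_2},\qquad \theta_1^{(t+1)}=\frac{y_1+\lambda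 w_1^{(t)}\theta_2^{(t)}}{1+\lambda w_1^{(t)}},$$ and then, with $\theta_1$ fixed at its new value, $$w_2^{(t)}=\frac{\bigl(1-\|\theta_2^{(t)}-\theta_1^{(t+1)}\|_2/(\lambda\delta)\bigr)_+}{2\|\theta_2^{(t)}-\theta_1^{(t+1)}\|_2},\qquad \theta_2^{(t+1)}=\frac{y_2+\lambda w_2^{(t)}\theta_1^{(t+1)}}{1+\lambda w_2^{(t)}}.$$ *)

theory Defs
  imports "HOL-Analysis.Analysis"
begin

definition mcp_weight :: "real \<Rightarrow> real \<Rightarrow> real \<Rightarrow> real" where
  "mcp_weight lam del r = max 0 (1 - r / (lam * del)) / (2 * r)"

definition mm_step :: "real \<Rightarrow> real \<Rightarrow> real ^ 'n \<Rightarrow> real ^ 'n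
    \<Rightarrow> ((real ^ 'n) \<times> (real ^ 'n)) \<Rightarrow> ((real ^ 'n) \<times> (real ^ 'n))" where
  "mm_step lam del y1 y2 th =
     (let a = fst th; b = snd th;
          w1 = mcp_weight lam del (norm (a - b));
          a' = (1 / (1 + lam * w1)) *\<^sub>R (y1 + (lam * w1) *\<^sub>R b);
          w2 = mcp_weight lam del (norm (b - a'));
          b' = (1 / (1 + lam * w2)) *\<^sub>R (y2 + (lam * w2) *\<^sub>R a')
      in (a', b'))"

fun mm_iter :: "real \<Rightarrow> real \<Rightarrow> real ^ 'n \<Rightarrow> real ^ 'n \<Rightarrow> nat
    \<Rightarrow> ((real ^ 'n) \<times> (real ^ 'n))" where
  "mm_iter lam del y1 y2 0 = (y1, y2)"
| "mm_iter lam del y1 y2 (Suc t) = mm_step lam del y1 y2 (mm_iter lam del y1 y2 t)"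

end

theory Submission
  imports Defs
begin

text \<open>When the centres are at least \<open>\<lambda>\<delta>\<close> apart the MCP weight vanishes, so \<open>(y1, y2)\<close>
  is a fixed point of the MM map. Otherwise the first update is a convex combination that shrinks
  the distance to \<open>\<theta>2\<close> by the factor \<open>1 / (1 + \<lambda> w)\<close>, and the prescribed \<open>\<lambda>\<close> is exactly
  the one giving \<open>\<lambda> w = \<phi> / (1 - \<phi>)\<close>.\<close>

lemma mcp_weight_eq_0:
  assumes "lam * del \<le> r" and "0 < lam * del"
  shows "mcp_weight lam del r = 0"
  using assms by (simp add: mcp_weight_def)

lemma mcp_weight_below_threshold:
  assumes "0 < r" and "r < lam * del"
  shows "mcp_weight lam del r = (lam * del - r) / (2 * (lam * del) * r)"
proof -
  have "0 < lam * del" using assms by linarith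
  then have "1 - r / (lam * del) = (lam * del - r) / (lam * del)"
    by (metis diff_divide_distrib divide_self less_irrefl)
  then show ?thesis
    using assms by (simp add: mcp_weight_def)
qed

lemma mcp_weight_nonneg: "0 \<le> r \<Longrightarrow> 0 \<le> mcp_weight lam del r"
  by (simp add: mcp_weight_def)

lemma mm_step_fixed_point:
  assumes "lam * del \<le> norm (y1 - y2)" and "0 < lam * del"
  shows "mm_step lam del y1 y2 (y1, y2) = (y1, y2)"
proof -
  have "mcp_weight lam del (norm (y1 - y2)) = 0" "mcp_weight lam del (norm (y2 - y1)) = 0"
    using mcp_weight_eq_0[OF _ assms(2)] assms(1) by (auto simp: norm_minus_commute)
  then show ?thesis by (simp add: mm_step_def Let_def)
qed

lemma mm_iter_fixed_point:
  assumes "lam * del \<le> norm (y1 - y2)" and "0 < lam * del"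
  shows "mm_iter lam del y1 y2 t = (y1, y2)"
  by (induction t) (simp_all add: mm_step_fixed_point[OF assms])

lemma dist_weighted_update:
  fixes a b :: "'a::real_normed_vector"
  assumes "0 \<le> c"
  shows "norm ((1 / (1 + c)) *\<^sub>R (a + c *\<^sub>R b) - b) = norm (a - b) / (1 + c)"
proof -
  have "(1 / (1 + c)) *\<^sub>R (a + c *\<^sub>R b) - b = (1 / (1 + c)) *\<^sub>R (a - b)"
    using assms by (simp add: algebra_simps scaleR_left_distrib [symmetric] divide_simps)
  then show ?thesis using assms by simp
qed

lemma mm_first_update_dist:
  "norm (fst (mm_iter lam del y1 y2 1) - y2)
     = norm (y1 - y2) / (1 + lam * mcp_weight lam del (norm (y1 - y2)))"
  if "0 \<le> lam"
  using dist_weighted_update[OF mult_nonneg_nonneg[OF that mcp_weight_nonneg[OF norm_ge_zero]]]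
  by (simp add: mm_step_def Let_def)

theorem lemma1:
  fixes y1 y2 :: "real ^ 'n" and lam del phi :: real
  assumes "y1 \<noteq> y2" and "lam > 0" and "del > 0" and "0 < phi" and "phi < 1"
  shows "(lam * del > norm (y1 - y2) \<and>
            lam = 2 * phi * (lam * del) * norm (y1 - y2)
                  / ((1 - phi) * (lam * del - norm (y1 - y2)))
          \<longrightarrow> norm (fst (mm_iter lam del y1 y2 1) - snd (mm_iter lam del y1 y2 0))
              = (1 - phi) * norm (fst (mm_iter lam del y1 y2 0) - snd (mm_iter lam del y1 y2 0)))
       \<and> (lam * del \<le> norm (y1 - y2) \<longrightarrow>
            (\<forall>t\<ge>1. fst (mm_iter lam del y1 y2 t) = y1 \<and> snd (mm_iter lam del y1 y2 t) = y2))"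
proof (intro conjI impI allI)
  assume "lam * del \<le> norm (y1 - y2)"
  with mm_iter_fixed_point assms(2,3)
  show "fst (mm_iter lam del y1 y2 t) = y1" "snd (mm_iter lam del y1 y2 t) = y2" for t
    by (metis fst_conv snd_conv mult_pos_pos)+
next
  define d e where "d = norm (y1 - y2)" and "e = lam * del"
  assume "lam * del > norm (y1 - y2) \<and>
            lam = 2 * phi * (lam * del) * norm (y1 - y2)
                  / ((1 - phi) * (lam * del - norm (y1 - y2)))"
  then have "d < e" and lam: "lam = 2 * phi * e * d / ((1 - phi) * (e - d))"
    by (auto simp: d_def e_def)
  have "0 < d" using assms(1) by (simp add: d_def)
  then have "mcp_weight lam del d = (e - d) / (2 * e * d)"
    using \<open>d < e\<close> unfolding e_def by (rule mcp_weight_below_threshold)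
  moreover have "lam * ((e - d) / (2 * e * d)) = phi / (1 - phi)"
    using \<open>0 < d\<close> \<open>d < e\<close> assms(5) by (subst lam) (simp add: divide_simps)
  ultimately have "1 + lam * mcp_weight lam del d = 1 + phi / (1 - phi)" by simp
  also have "\<dots> = 1 / (1 - phi)"
    using assms(5) by (simp add: field_simps)
  finally show "norm (fst (mm_iter lam del y1 y2 1) - snd (mm_iter lam del y1 y2 0))
              = (1 - phi) * norm (fst (mm_iter lam del y1 y2 0) - snd (mm_iter lam del y1 y2 0))"
    using mm_first_update_dist[of lam del y1 y2] assms(2) by (simp add: d_def)
qed

end
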